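(* Let $p=p(n)$ and $G\in\mathcal G(n,p)$. If $p=o(n^{-5/4})$, then with high probability $G$ is reconstructible from its $2$-neighbourhoods.
   Context: $\mathcal G(n,p)$ is the Erdős–Rényi random graph on vertex set $[n]$ in which each pair is an edge independently with probability $p$. "With high probability" means with probability tending to $1$ as $n\to\infty$. For a graph $G$, a vertex $v$ and an integer $r\ge1$, the $r$-neighbourhood $N_r^{(G)}(v)$ is the subgraph of $G$ induced by the vertices at distance at most $r$ from $v$, considered as a graph rooted at $v$. Graphs $G$ and $H$ have isomorphic $r$-neighbourhoods if there is a bijection $\phi:V(G)\to V(H)$ such that for every $v\in V(G)$ there is a graph isomorphism $N_r^{(G)}(v)\to N_r^{(H)}(\phi(v))$ mapping $v$ to $\phi(v)$. $G$ is reconstructible from its $r$-neighbourhoods if every graph $H$ with $r$-neighbourhoods isomorphic to those of $G$ is isomorphic to $G$. *)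

theory Defs
  imports Complex_Main "HOL-Library.Landau_Symbols"
begin

definition all_edges :: "nat \<Rightarrow> nat set set" where
  "all_edges n = {e. e \<subseteq> {..<n} \<and> card e = 2}"

definition graphs_on :: "nat \<Rightarrow> nat set set set" where
  "graphs_on n = Pow (all_edges n)"

definition gnp_prob :: "nat \<Rightarrow> real \<Rightarrow> (nat set set \<Rightarrow> bool) \<Rightarrow> real" where
  "gnp_prob n p P =
     (\<Sum>E\<in>graphs_on n. if P E then p ^ card E * (1 - p) ^ (card (all_edges n) - card E) else 0)"

fun ball :: "nat set set \<Rightarrow> nat \<Rightarrow> nat \<Rightarrow> nat set" where
  "ball E 0 v = {v}"
| "ball E (Suc r) v = ball E r v \<union> {u. \<exists>w\<in>ball E r v. {w, u} \<in> E}"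

definition nbhd_iso :: "nat set set \<Rightarrow> nat set set \<Rightarrow> nat \<Rightarrow> nat \<Rightarrow> nat \<Rightarrow> bool" where
  "nbhd_iso G H r v w \<longleftrightarrow>
     (\<exists>f. bij_betw f (ball G r v) (ball H r w) \<and> f v = w \<and>
          (\<forall>x\<in>ball G r v. \<forall>y\<in>ball G r v. {x, y} \<in> G \<longleftrightarrow> {f x, f y} \<in> H))"

definition same_nbhds :: "nat \<Rightarrow> nat \<Rightarrow> nat set set \<Rightarrow> nat set set \<Rightarrow> bool" where
  "same_nbhds n r G H \<longleftrightarrow>
     (\<exists>\<phi>. bij_betw \<phi> {..<n} {..<n} \<and> (\<forall>v\<in>{..<n}. nbhd_iso G H r v (\<phi> v)))"

definition graph_iso :: "nat \<Rightarrow> nat set set \<Rightarrow> nat set set \<Rightarrow> bool" where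
  "graph_iso n G H \<longleftrightarrow>
     (\<exists>f. bij_betw f {..<n} {..<n} \<and>
          (\<forall>x\<in>{..<n}. \<forall>y\<in>{..<n}. {x, y} \<in> G \<longleftrightarrow> {f x, f y} \<in> H))"

text \<open>Every graph H with the
  same r-neighbourhoods has n vertices, hence is isomorphic to a graph on [n];
  as all notions are isomorphism-invariant it suffices to quantify over graphs on [n].\<close>

definition reconstructible :: "nat \<Rightarrow> nat \<Rightarrow> nat set set \<Rightarrow> bool" where
  "reconstructible n r G \<longleftrightarrow>
     (\<forall>H\<in>graphs_on n. same_nbhds n r G H \<longrightarrow> graph_iso n G H)"

end

theory Submission
  imports Defs "HOL-Combinatorics.Transposition" "HOL-Library.FuncSet"
begin

text \<open>If every 2-ball of G has at most four vertices, G is reconstructible. Such a graph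
  has a critical vertex c whose 2-ball is a union of components. The partner of c under
  the given bijection of neighbourhoods is critical too, with an isomorphic 2-ball that is
  again a union of components. Having isomorphic 2-neighbourhoods is a difunctional
  relation, so the bijection can be realigned to agree with this isomorphism on the ball
  of c; deleting both balls leaves a smaller instance. Otherwise some 2-ball has five
  vertices, and G contains one of at most 2^32 n^5 graphs with four edges on at most five
  vertices; by the union bound this has probability at most 2^32 n^5 p^4, which tends
  to 0 when p = o(n^(-5/4)).\<close>

definition edges_within :: "nat set set \<Rightarrow> nat set \<Rightarrow> bool" where
  "edges_within E V \<longleftrightarrow> (\<forall>e\<in>E. e \<subseteq> V \<and> card e = 2)"

definition small_balls :: "nat set set \<Rightarrow> bool" where
  "small_balls E \<longleftrightarrow> (\<forall>v. finite (ball E 2 v) \<and> card (ball E 2 v) \<le> 4)"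

definition edge_closed :: "nat set set \<Rightarrow> nat set \<Rightarrow> bool" where
  "edge_closed E S \<longleftrightarrow> (\<forall>x\<in>S. \<forall>y. {x, y} \<in> E \<longrightarrow> y \<in> S)"

definition edges_outside :: "nat set set \<Rightarrow> nat set \<Rightarrow> nat set set" where
  "edges_outside E S = {e\<in>E. e \<inter> S = {}}"

definition induced_iso :: "nat set set \<Rightarrow> nat set set \<Rightarrow> (nat \<Rightarrow> nat) \<Rightarrow> nat set \<Rightarrow> nat set \<Rightarrow> bool" where
  "induced_iso G H f V W \<longleftrightarrow>
     bij_betw f V W \<and> (\<forall>x\<in>V. \<forall>y\<in>V. {x, y} \<in> G \<longleftrightarrow> {f x, f y} \<in> H)"

lemma nbhd_iso_iff: "nbhd_iso G H r v w \<longleftrightarrow> (\<exists>f. induced_iso G H f (ball G r v) (ball H r w) \<and> f v = w)"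
  unfolding nbhd_iso_def induced_iso_def by blast

lemma graph_iso_iff: "graph_iso n G H \<longleftrightarrow> (\<exists>f. induced_iso G H f {..<n} {..<n})"
  unfolding graph_iso_def induced_iso_def by blast

lemma center_in_ball: "v \<in> ball E r v"
  by (induction r) auto

lemma mem_ball_2: "x \<in> ball E 2 v \<longleftrightarrow> x = v \<or> {v, x} \<in> E \<or> (\<exists>u. {v, u} \<in> E \<and> {u, x} \<in> E)"
  by (auto simp: numeral_2_eq_2)

lemma ball_mono: "E' \<subseteq> E \<Longrightarrow> ball E' r v \<subseteq> ball E r v"
  by (induction r) auto

lemma ball_isolated: "\<forall>e\<in>E. v \<notin> e \<Longrightarrow> ball E r v = {v}"
  by (induction r) auto

lemma edges_within_neq: "edges_within E V \<Longrightarrow> {a, b} \<in> E \<Longrightarrow> a \<noteq> b"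
  unfolding edges_within_def by fastforce

lemma edges_within_mem: "edges_within E V \<Longrightarrow> {a, b} \<in> E \<Longrightarrow> a \<in> V \<and> b \<in> V"
  unfolding edges_within_def by blast

lemma edges_outside_subset: "edges_outside E S \<subseteq> E"
  unfolding edges_outside_def by blast

lemma edges_within_outside:
  "edges_within E V \<Longrightarrow> edges_within (edges_outside E S) (V - S)"
  unfolding edges_within_def edges_outside_def by auto

lemma ball_subset: "edges_within E V \<Longrightarrow> v \<in> V \<Longrightarrow> ball E r v \<subseteq> V"
  by (induction r) (auto dest: edges_within_mem)

lemma small_balls_mono: "small_balls E \<Longrightarrow> E' \<subseteq> E \<Longrightarrow> small_balls E'"
  unfolding small_balls_def by (meson ball_mono card_mono order_trans rev_finite_subset)

lemma induced_iso_card_eq: "induced_iso G H f V W \<Longrightarrow> card V = card W"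
  unfolding induced_iso_def by (rule bij_betw_same_card) blast

text \<open>In both cases the 2-ball of a critical vertex is a union of components
  (\<open>critical_ball_edge_closed\<close>).\<close>

definition critical :: "nat set set \<Rightarrow> nat \<Rightarrow> bool" where
  "critical E w \<longleftrightarrow> card (ball E 2 w) = 4 \<or> (\<forall>x\<in>ball E 2 w. x = w \<or> {w, x} \<in> E)"

lemma small_ball_2_subset_ball_2_neighbour:
  assumes E: "edges_within E V" and fin: "finite (ball E 2 w)" and small: "card (ball E 2 w) \<le> 4"
    and wa: "{w, a} \<in> E" and ax: "{a, x} \<in> E" and xw: "x \<noteq> w" "{w, x} \<notin> E"
  shows "ball E 2 w \<subseteq> ball E 2 a"
proof
  fix z assume z: "z \<in> ball E 2 w"
  have aw: "{a, w} \<in> E" using wa by (simp add: insert_commute)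
  show "z \<in> ball E 2 a"
  proof (cases "z = w \<or> {w, z} \<in> E \<or> {a, z} \<in> E \<or> z = x \<or> z = a")
    case True
    then show ?thesis using aw ax unfolding mem_ball_2 by blast
  next
    case False
    then obtain u where u: "{w, u} \<in> E" "{u, z} \<in> E" using z unfolding mem_ball_2 by blast
    have "w \<noteq> a" "w \<noteq> u" "a \<noteq> x" "u \<noteq> z" using edges_within_neq[OF E] wa u ax by blast+
    moreover have "u \<noteq> a" "x \<noteq> u" using False u xw by blast+
    moreover have "z \<noteq> w" "z \<noteq> a" "z \<noteq> x" using False by blast+
    ultimately have "card {w, a, x, u, z} = 5" using xw(1) by simp
    moreover have "{w, a, x, u, z} \<subseteq> ball E 2 w" using wa ax u z by (auto simp: mem_ball_2)
    ultimately have "5 \<le> card (ball E 2 w)" using card_mono[OF fin] by metis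
    then show ?thesis using small by simp
  qed
qed

lemma critical_ball_edge_closed:
  assumes E: "edges_within E V" and small: "small_balls E" and crit: "critical E w"
  shows "edge_closed E (ball E 2 w)"
  unfolding edge_closed_def
proof (intro ballI allI impI)
  fix x y assume x: "x \<in> ball E 2 w" and xy: "{x, y} \<in> E"
  show "y \<in> ball E 2 w"
  proof (rule ccontr)
    assume y: "y \<notin> ball E 2 w"
    have xw: "x \<noteq> w" "{w, x} \<notin> E" using xy y unfolding mem_ball_2 by blast+
    obtain a where wa: "{w, a} \<in> E" and ax: "{a, x} \<in> E" using x xw unfolding mem_ball_2 by blast
    have four: "card (ball E 2 w) = 4" using crit x xw unfolding critical_def by blast
    have fin: "finite (ball E 2 w)" and fina: "finite (ball E 2 a)" and smalla: "card (ball E 2 a) \<le> 4"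
      using small unfolding small_balls_def by blast+
    have "ball E 2 w \<subseteq> ball E 2 a"
      using small_ball_2_subset_ball_2_neighbour[OF E fin _ wa ax xw] four by simp
    moreover have "y \<in> ball E 2 a" using ax xy unfolding mem_ball_2 by blast
    ultimately have "card (insert y (ball E 2 w)) \<le> 4"
      using card_mono[OF fina] smalla by (meson insert_subset order_trans)
    then show False using four y fin by simp
  qed
qed

text \<open>A vertex maximising the size of its 2-ball is critical, or else its 2-ball is a
  path w - a - x and then a is critical.\<close>

lemma exists_critical:
  assumes ne: "V \<noteq> {}" and E: "edges_within E V" and small: "small_balls E"
  obtains c where "c \<in> V" "critical E c"
proof -
  obtain v0 where "v0 \<in> V" using ne by blast
  moreover have "\<forall>v. v \<in> V \<longrightarrow> card (ball E 2 v) < 5"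
  proof (intro allI impI)
    fix v
    have "card (ball E 2 v) \<le> 4" using small unfolding small_balls_def by blast
    then show "card (ball E 2 v) < 5" by linarith
  qed
  ultimately obtain w where w: "w \<in> V" and max: "\<And>v. v \<in> V \<Longrightarrow> card (ball E 2 v) \<le> card (ball E 2 w)"
    using Lattices_Big.ex_has_greatest_nat[of "\<lambda>v. v \<in> V" v0 "\<lambda>v. card (ball E 2 v)" 5] by blast
  show thesis
  proof (cases "critical E w")
    case True then show thesis using w that by blast
  next
    case False
    then obtain x where x: "x \<in> ball E 2 w" "x \<noteq> w" "{w, x} \<notin> E" and not4: "card (ball E 2 w) \<noteq> 4"
      unfolding critical_def by blast
    obtain a where wa: "{w, a} \<in> E" and ax: "{a, x} \<in> E" using x unfolding mem_ball_2 by blast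
    have finw: "finite (ball E 2 w)" and le: "card (ball E 2 w) \<le> 4" and fina: "finite (ball E 2 a)"
      using small unfolding small_balls_def by blast+
    have sub: "ball E 2 w \<subseteq> ball E 2 a"
      using small_ball_2_subset_ball_2_neighbour[OF E finw le wa ax x(2,3)] .
    have aV: "a \<in> V" using edges_within_mem[OF E wa] by blast
    have eq: "ball E 2 w = ball E 2 a"
      using card_subset_eq[OF fina sub] max[OF aV] card_mono[OF fina sub] by simp
    have path: "{w, a, x} \<subseteq> ball E 2 w" using wa ax by (auto simp: mem_ball_2)
    have three: "card {w, a, x} = 3"
      using edges_within_neq[OF E wa] edges_within_neq[OF E ax] x by auto
    then have "card (ball E 2 w) = 3" using card_mono[OF finw path] le not4 by simp
    then have "ball E 2 a = {w, a, x}" using card_subset_eq[OF finw path] three eq by simp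
    moreover have "{a, w} \<in> E" using wa by (simp add: insert_commute)
    ultimately have "critical E a" unfolding critical_def using ax by auto
    then show thesis using aV that by blast
  qed
qed

lemma nbhd_iso_critical:
  assumes iso: "nbhd_iso G H 2 v w" and crit: "critical G v"
  shows "critical H w"
proof -
  obtain f where f: "induced_iso G H f (ball G 2 v) (ball H 2 w)" "f v = w"
    using iso unfolding nbhd_iso_iff by blast
  have card_eq: "card (ball G 2 v) = card (ball H 2 w)" using induced_iso_card_eq[OF f(1)] .
  show ?thesis
  proof (cases "card (ball G 2 v) = 4")
    case True then show ?thesis using card_eq unfolding critical_def by simp
  next
    case False
    then have star: "\<forall>x\<in>ball G 2 v. x = v \<or> {v, x} \<in> G" using crit unfolding critical_def by blast
    have onto: "f ` ball G 2 v = ball H 2 w" and adj: "\<forall>x\<in>ball G 2 v. \<forall>y\<in>ball G 2 v. {x, y} \<in> G \<longleftrightarrow> {f x, f y} \<in> H"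
      using f(1) unfolding induced_iso_def bij_betw_def by blast+
    have "x = w \<or> {w, x} \<in> H" if x: "x \<in> ball H 2 w" for x
    proof -
      obtain y where y: "y \<in> ball G 2 v" "x = f y" using x[folded onto] by blast
      have "y = v \<or> {v, y} \<in> G" using star y(1) by blast
      then show ?thesis using adj y center_in_ball[of v G 2] f(2) by blast
    qed
    then show ?thesis unfolding critical_def by blast
  qed
qed

lemma induced_iso_comp:
  "induced_iso G H f A B \<Longrightarrow> induced_iso H K g B C \<Longrightarrow> induced_iso G K (g \<circ> f) A C"
  unfolding induced_iso_def bij_betw_def by (auto simp: comp_inj_on)

lemma induced_iso_inv:
  assumes "induced_iso G H f A B"
  shows "induced_iso H G (inv_into A f) B A"
proof -
  have bij: "bij_betw f A B" and adj: "\<forall>x\<in>A. \<forall>y\<in>A. {x, y} \<in> G \<longleftrightarrow> {f x, f y} \<in> H"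
    using assms unfolding induced_iso_def by blast+
  have "bij_betw (inv_into A f) B A" using bij_betw_inv_into[OF bij] .
  moreover have "inv_into A f x \<in> A" "f (inv_into A f x) = x" if "x \<in> B" for x
    using that bij by (auto simp: bij_betw_def inv_into_into f_inv_into_f)
  ultimately show ?thesis unfolding induced_iso_def using adj by metis
qed

lemma induced_iso_image_ball:
  assumes iso: "induced_iso G H g C D" and cG: "edge_closed G C" and cH: "edge_closed H D"
    and v: "v \<in> C"
  shows "g ` ball G r v = ball H r (g v) \<and> ball G r v \<subseteq> C"
proof (induction r)
  case 0 then show ?case using v by simp
next
  case (Suc r)
  have bij: "bij_betw g C D" and adj: "\<forall>x\<in>C. \<forall>y\<in>C. {x, y} \<in> G \<longleftrightarrow> {g x, g y} \<in> H"
    using iso unfolding induced_iso_def by blast+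
  let ?B = "ball G r v"
  have BC: "?B \<subseteq> C" and im: "g ` ?B = ball H r (g v)" using Suc by auto
  have N: "{u. \<exists>w\<in>?B. {w, u} \<in> G} \<subseteq> C" using BC cG unfolding edge_closed_def by blast
  have "g ` {u. \<exists>w\<in>?B. {w, u} \<in> G} = {u. \<exists>w\<in>ball H r (g v). {w, u} \<in> H}"
  proof
    show "g ` {u. \<exists>w\<in>?B. {w, u} \<in> G} \<subseteq> {u. \<exists>w\<in>ball H r (g v). {w, u} \<in> H}"
      unfolding im[symmetric] using N BC adj by blast
    show "{u. \<exists>w\<in>ball H r (g v). {w, u} \<in> H} \<subseteq> g ` {u. \<exists>w\<in>?B. {w, u} \<in> G}"
    proof
      fix u' assume "u' \<in> {u. \<exists>w\<in>ball H r (g v). {w, u} \<in> H}"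
      then obtain w where w: "w \<in> ?B" "{g w, u'} \<in> H" unfolding im[symmetric] by blast
      have "g w \<in> D" using w(1) BC bij unfolding bij_betw_def by blast
      then have "u' \<in> D" using cH w(2) unfolding edge_closed_def by blast
      then obtain u where u: "u \<in> C" "u' = g u" using bij unfolding bij_betw_def by blast
      then have "{w, u} \<in> G" using adj w BC by blast
      then show "u' \<in> g ` {u. \<exists>w\<in>?B. {w, u} \<in> G}" using u w by blast
    qed
  qed
  then show ?case using im BC N by (simp add: image_Un)
qed

lemma induced_iso_nbhd_iso:
  assumes iso: "induced_iso G H g C D" and "edge_closed G C" "edge_closed H D" "v \<in> C"
  shows "nbhd_iso G H r v (g v)"
proof -
  have im: "g ` ball G r v = ball H r (g v)" and sub: "ball G r v \<subseteq> C"
    using induced_iso_image_ball[OF assms] by auto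
  have "induced_iso G H g (ball G r v) (ball H r (g v))"
    using iso bij_betw_subset[OF _ sub im] sub unfolding induced_iso_def by blast
  then show ?thesis unfolding nbhd_iso_iff by blast
qed

definition difunctional :: "('a \<Rightarrow> 'b \<Rightarrow> bool) \<Rightarrow> bool" where
  "difunctional R \<longleftrightarrow> (\<forall>v v' w w'. R v w \<longrightarrow> R v' w \<longrightarrow> R v' w' \<longrightarrow> R v w')"

lemma nbhd_iso_difunctional: "difunctional (nbhd_iso G H r)"
  unfolding difunctional_def
proof (intro allI impI)
  fix v v' w w'
  assume "nbhd_iso G H r v w" "nbhd_iso G H r v' w" "nbhd_iso G H r v' w'"
  note assms = this
  obtain f1 where f1: "induced_iso G H f1 (ball G r v) (ball H r w)" "f1 v = w"
    using assms(1) unfolding nbhd_iso_iff by blast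
  obtain f2 where f2: "induced_iso G H f2 (ball G r v') (ball H r w)" "f2 v' = w"
    using assms(2) unfolding nbhd_iso_iff by blast
  obtain f3 where f3: "induced_iso G H f3 (ball G r v') (ball H r w')" "f3 v' = w'"
    using assms(3) unfolding nbhd_iso_iff by blast
  let ?h = "f3 \<circ> (inv_into (ball G r v') f2 \<circ> f1)"
  have "induced_iso G H ?h (ball G r v) (ball H r w')"
    using induced_iso_comp[OF induced_iso_comp[OF f1(1) induced_iso_inv[OF f2(1)]] f3(1)] .
  moreover have "inv_into (ball G r v') f2 w = v'"
    using f2 center_in_ball[of v' G r] unfolding induced_iso_def bij_betw_def
    by (metis inv_into_f_f)
  then have "?h v = w'" using f1(2) f3(2) by simp
  ultimately show "nbhd_iso G H r v w'" unfolding nbhd_iso_iff by blast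
qed

lemma difunctional_bij_redirect:
  assumes difun: "difunctional R"
    and bij: "bij_betw \<psi> V1 V2" and R: "\<forall>v\<in>V1. R v (\<psi> v)"
    and c: "c \<in> V1" and w: "w \<in> V2" "R c w"
  obtains \<psi>' where "bij_betw \<psi>' V1 V2" "\<forall>v\<in>V1. R v (\<psi>' v)" "\<psi>' c = w"
    "\<And>v. v \<noteq> c \<Longrightarrow> \<psi> v \<noteq> w \<Longrightarrow> \<psi>' v = \<psi> v"
proof -
  obtain c' where c': "c' \<in> V1" "\<psi> c' = w" using bij w(1) unfolding bij_betw_def by blast
  define \<psi>' where "\<psi>' = \<psi> \<circ> Transposition.transpose c c'"
  have "bij_betw \<psi>' V1 V2" unfolding \<psi>'_def using bij_betw_swap_iff[OF c c'(1)] bij by blast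
  moreover have "R c' (\<psi> c)" using difun c c' R w(2) unfolding difunctional_def by blast
  then have "\<forall>v\<in>V1. R v (\<psi>' v)" unfolding \<psi>'_def using R c' w(2) by (simp add: transpose_def)
  moreover have "\<psi>' c = w" unfolding \<psi>'_def using c' by simp
  moreover have "\<psi>' v = \<psi> v" if "v \<noteq> c" "\<psi> v \<noteq> w" for v
    unfolding \<psi>'_def using that c' by (auto simp: transpose_def)
  ultimately show thesis using that by blast
qed

lemma difunctional_bij_extend:
  assumes "finite C"
    and difun: "difunctional R"
    and "C \<subseteq> V1" and bij: "bij_betw \<phi> V1 V2" and R: "\<forall>v\<in>V1. R v (\<phi> v)"
    and "inj_on g C" "g ` C \<subseteq> V2" "\<forall>v\<in>C. R v (g v)"
  shows "\<exists>\<psi>. bij_betw \<psi> V1 V2 \<and> (\<forall>v\<in>V1. R v (\<psi> v)) \<and> (\<forall>v\<in>C. \<psi> v = g v)"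
  using assms(1,3,6-8)
proof (induction C rule: finite_induct)
  case empty then show ?case using bij R by blast
next
  case (insert c F)
  then obtain \<psi> where \<psi>: "bij_betw \<psi> V1 V2" "\<forall>v\<in>V1. R v (\<psi> v)" "\<forall>v\<in>F. \<psi> v = g v"
    by auto
  obtain \<psi>' where \<psi>': "bij_betw \<psi>' V1 V2" "\<forall>v\<in>V1. R v (\<psi>' v)" "\<psi>' c = g c"
    "\<And>v. v \<noteq> c \<Longrightarrow> \<psi> v \<noteq> g c \<Longrightarrow> \<psi>' v = \<psi> v"
    using difunctional_bij_redirect[OF difun \<psi>(1,2)] insert.prems by auto
  have "\<psi>' v = g v" if v: "v \<in> F" for v
  proof -
    have "\<psi> v = g v" "v \<noteq> c" using v \<psi>(3) insert.hyps(2) by auto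
    moreover have "g v \<noteq> g c" using v insert.hyps(2) insert.prems(2) unfolding inj_on_def by force
    ultimately show ?thesis using \<psi>'(4) by metis
  qed
  then have "\<forall>v\<in>insert c F. \<psi>' v = g v" using \<psi>'(3) by blast
  then show ?case using \<psi>'(1,2) by blast
qed

lemma ball_edges_outside:
  assumes closed: "edge_closed G C" and v: "v \<notin> C"
  shows "ball (edges_outside G C) r v = ball G r v \<and> ball G r v \<inter> C = {}"
proof (induction r)
  case 0 then show ?case using v by simp
next
  case (Suc r)
  have out: "u \<notin> C" if "w \<in> ball G r v" "{w, u} \<in> G" for w u
    using that Suc closed unfolding edge_closed_def by (metis disjoint_iff insert_commute)
  then have "{u. \<exists>w\<in>ball G r v. {w, u} \<in> edges_outside G C} = {u. \<exists>w\<in>ball G r v. {w, u} \<in> G}"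
    using Suc unfolding edges_outside_def by blast
  then show ?case using Suc out by auto
qed

lemma nbhd_iso_edges_outside:
  assumes "edge_closed G C" "edge_closed H D" "v \<notin> C" "w \<notin> D" "nbhd_iso G H r v w"
  shows "nbhd_iso (edges_outside G C) (edges_outside H D) r v w"
proof -
  obtain f where f: "induced_iso G H f (ball G r v) (ball H r w)" "f v = w"
    using assms(5) unfolding nbhd_iso_iff by blast
  have G: "ball (edges_outside G C) r v = ball G r v" "ball G r v \<inter> C = {}"
    using ball_edges_outside[OF assms(1,3)] by auto
  have H: "ball (edges_outside H D) r w = ball H r w" "ball H r w \<inter> D = {}"
    using ball_edges_outside[OF assms(2,4)] by auto
  have "f ` ball G r v \<subseteq> ball H r w" using f(1) unfolding induced_iso_def bij_betw_def by blast
  then have "induced_iso (edges_outside G C) (edges_outside H D) f (ball G r v) (ball H r w)"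
    using f(1) G(2) H(2) unfolding induced_iso_def edges_outside_def by blast
  then show ?thesis unfolding nbhd_iso_iff G(1) H(1) using f(2) by blast
qed

lemma induced_iso_glue:
  assumes "C \<subseteq> V1" "D \<subseteq> V2" and cG: "edge_closed G C" and cH: "edge_closed H D"
    and g: "induced_iso G H g C D"
    and f: "induced_iso (edges_outside G C) (edges_outside H D) f (V1 - C) (V2 - D)"
  shows "induced_iso G H (\<lambda>x. if x \<in> C then g x else f x) V1 V2"
proof -
  let ?F = "\<lambda>x. if x \<in> C then g x else f x"
  have "bij_betw ?F C D \<longleftrightarrow> bij_betw g C D" by (rule bij_betw_cong) simp
  then have bij_g: "bij_betw ?F C D" using g unfolding induced_iso_def by blast
  have "bij_betw ?F (V1 - C) (V2 - D) \<longleftrightarrow> bij_betw f (V1 - C) (V2 - D)" by (rule bij_betw_cong) simp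
  then have bij_f: "bij_betw ?F (V1 - C) (V2 - D)" using f unfolding induced_iso_def by blast
  have "bij_betw ?F V1 V2"
    using bij_betw_combine[OF bij_g bij_f] assms(1,2) by (simp add: Un_absorb1)
  moreover have "{x, y} \<in> G \<longleftrightarrow> {?F x, ?F y} \<in> H" if x: "x \<in> V1" and y: "y \<in> V1" for x y
  proof -
    have cross: "{a, b} \<notin> G \<and> {?F a, ?F b} \<notin> H" if a: "a \<in> C" and b: "b \<in> V1 - C" for a b
    proof -
      have "?F a \<in> D" "?F b \<in> V2 - D"
        using bij_betw_apply[OF bij_g a] bij_betw_apply[OF bij_f b] by simp_all
      then show ?thesis using a b cG cH unfolding edge_closed_def by blast
    qed
    consider "x \<in> C" "y \<in> C" | "x \<in> C" "y \<notin> C" | "x \<notin> C" "y \<in> C" | "x \<notin> C" "y \<notin> C"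
      by blast
    then show ?thesis
    proof cases
      case 1 then show ?thesis using g unfolding induced_iso_def by simp
    next
      case 2 then show ?thesis using cross y by blast
    next
      case 3 then show ?thesis using cross x by (metis Diff_iff insert_commute)
    next
      case 4
      have "{f x, f y} \<inter> D = {}" using f x y 4 unfolding induced_iso_def bij_betw_def by blast
      then show ?thesis using f x y 4 unfolding induced_iso_def edges_outside_def by auto
    qed
  qed
  ultimately show ?thesis unfolding induced_iso_def by blast
qed

lemma induced_iso_cong:
  "(\<And>x. x \<in> V \<Longrightarrow> f x = g x) \<Longrightarrow> induced_iso G H f V W \<longleftrightarrow> induced_iso G H g V W"
  unfolding induced_iso_def by (simp cong: bij_betw_cong)

lemma critical_ball_matching:
  assumes G: "edges_within G V1" and H: "edges_within H V2"
    and small: "small_balls G" "small_balls H"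
    and \<phi>: "bij_betw \<phi> V1 V2" "\<forall>v\<in>V1. nbhd_iso G H 2 v (\<phi> v)"
    and c: "c \<in> V1" "critical G c"
  obtains \<psi> where "bij_betw \<psi> V1 V2" "\<forall>v\<in>V1. nbhd_iso G H 2 v (\<psi> v)"
    "induced_iso G H \<psi> (ball G 2 c) (ball H 2 (\<psi> c))"
    "edge_closed G (ball G 2 c)" "edge_closed H (ball H 2 (\<psi> c))"
proof -
  let ?C = "ball G 2 c" and ?D = "ball H 2 (\<phi> c)"
  have iso_c: "nbhd_iso G H 2 c (\<phi> c)" using \<phi>(2) c(1) by blast
  then obtain g where g: "induced_iso G H g ?C ?D" "g c = \<phi> c"
    unfolding nbhd_iso_iff by blast
  have closed: "edge_closed G ?C" "edge_closed H ?D"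
    using critical_ball_edge_closed[OF G small(1) c(2)]
      critical_ball_edge_closed[OF H small(2) nbhd_iso_critical[OF iso_c c(2)]] by blast+
  have "?D \<subseteq> V2" using ball_subset[OF H bij_betw_apply[OF \<phi>(1) c(1)]] .
  then have inj: "inj_on g ?C" and into: "g ` ?C \<subseteq> V2"
    using g(1) unfolding induced_iso_def bij_betw_def by auto
  have fin: "finite ?C" using small(1) unfolding small_balls_def by blast
  have g_nbhd: "\<forall>v\<in>?C. nbhd_iso G H 2 v (g v)" using induced_iso_nbhd_iso[OF g(1) closed] by blast
  obtain \<psi> where \<psi>: "bij_betw \<psi> V1 V2" "\<forall>v\<in>V1. nbhd_iso G H 2 v (\<psi> v)"
      "\<forall>v\<in>?C. \<psi> v = g v"
    using difunctional_bij_extend[OF fin nbhd_iso_difunctional ball_subset[OF G c(1)] \<phi> inj into g_nbhd] by blast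
  have "\<psi> c = \<phi> c" using \<psi>(3) g(2) center_in_ball[of c G 2] by simp
  moreover have "induced_iso G H \<psi> ?C ?D" using g(1) induced_iso_cong[of ?C \<psi> g] \<psi>(3) by simp
  ultimately show thesis using that[OF \<psi>(1,2)] closed by simp
qed

lemma small_balls_same_nbhds_iso:
  assumes "finite V1" "edges_within G V1" "edges_within H V2" "small_balls G" "small_balls H"
    "bij_betw \<phi> V1 V2" "\<forall>v\<in>V1. nbhd_iso G H 2 v (\<phi> v)"
  shows "\<exists>f. induced_iso G H f V1 V2"
  using assms
proof (induction "card V1" arbitrary: V1 V2 G H \<phi> rule: less_induct)
  case less
  note fin = less.prems(1) and G = less.prems(2) and H = less.prems(3)
    and small = less.prems(4,5) and \<phi> = less.prems(6,7)
  show ?case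
  proof (cases "V1 = {}")
    case True
    then have "V2 = {}" using \<phi>(1) by (simp add: bij_betw_def)
    then show ?thesis using True unfolding induced_iso_def by auto
  next
    case False
    then obtain c where c: "c \<in> V1" "critical G c" using exists_critical[OF _ G small(1)] by blast
    obtain \<psi> where \<psi>: "bij_betw \<psi> V1 V2" "\<forall>v\<in>V1. nbhd_iso G H 2 v (\<psi> v)"
        "induced_iso G H \<psi> (ball G 2 c) (ball H 2 (\<psi> c))"
        "edge_closed G (ball G 2 c)" "edge_closed H (ball H 2 (\<psi> c))"
      using critical_ball_matching[OF G H small \<phi> c] by blast
    define C where "C = ball G 2 c"
    define D where "D = ball H 2 (\<psi> c)"
    have CV: "C \<subseteq> V1" and DV: "D \<subseteq> V2"
      unfolding C_def D_def using ball_subset G H c(1) bij_betw_apply[OF \<psi>(1) c(1)] by blast+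
    have "\<psi> ` C = D"
      using \<psi>(3) unfolding C_def D_def induced_iso_def by (simp add: bij_betw_imp_surj_on)
    then have "\<psi> ` (V1 - C) = V2 - D"
      using \<psi>(1) CV inj_on_image_set_diff[of \<psi> V1 V1 C] unfolding bij_betw_def by simp
    then have rest: "bij_betw \<psi> (V1 - C) (V2 - D)" by (rule bij_betw_subset[OF \<psi>(1) Diff_subset])
    have closed: "edge_closed G C" "edge_closed H D" using \<psi>(4,5) unfolding C_def D_def .
    have nbhd: "\<forall>v\<in>V1 - C. nbhd_iso (edges_outside G C) (edges_outside H D) 2 v (\<psi> v)"
    proof
      fix v assume v: "v \<in> V1 - C"
      have "v \<notin> C" "\<psi> v \<notin> D" using v bij_betw_apply[OF rest v] by blast+
      moreover have "nbhd_iso G H 2 v (\<psi> v)" using v \<psi>(2) by blast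
      ultimately show "nbhd_iso (edges_outside G C) (edges_outside H D) 2 v (\<psi> v)"
        by (rule nbhd_iso_edges_outside[OF closed])
    qed
    have "V1 - C \<subset> V1" using c(1) center_in_ball[of c G 2] unfolding C_def by blast
    then have "card (V1 - C) < card V1" by (rule psubset_card_mono[OF fin])
    then obtain f where "induced_iso (edges_outside G C) (edges_outside H D) f (V1 - C) (V2 - D)"
      using less.hyps[OF _ _ edges_within_outside[OF G] edges_within_outside[OF H]
          small_balls_mono[OF small(1) edges_outside_subset]
          small_balls_mono[OF small(2) edges_outside_subset] rest nbhd] fin
      by blast
    then show ?thesis
      using induced_iso_glue[OF CV DV closed \<psi>(3)[folded C_def D_def]] by blast
  qed
qed

lemma edges_within_all_edges: "E \<subseteq> all_edges n \<Longrightarrow> edges_within E {..<n}"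
  unfolding edges_within_def all_edges_def by auto

lemma ball_outside_lessThan: "E \<subseteq> all_edges n \<Longrightarrow> \<not> v < n \<Longrightarrow> ball E r v = {v}"
  by (rule ball_isolated) (auto simp: all_edges_def)

lemma finite_ball: "E \<subseteq> all_edges n \<Longrightarrow> finite (ball E r v)"
  using ball_subset[OF edges_within_all_edges] ball_outside_lessThan
  by (metis finite_lessThan finite.simps lessThan_iff rev_finite_subset)

lemma same_nbhds_small_balls:
  assumes G: "small_balls G" and H: "H \<subseteq> all_edges n" and same: "same_nbhds n 2 G H"
  shows "small_balls H"
  unfolding small_balls_def
proof
  fix w
  show "finite (ball H 2 w) \<and> card (ball H 2 w) \<le> 4"
  proof (cases "w < n")
    case True
    obtain \<phi> where \<phi>: "bij_betw \<phi> {..<n} {..<n}" "\<forall>v\<in>{..<n}. nbhd_iso G H 2 v (\<phi> v)"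
      using same unfolding same_nbhds_def by blast
    obtain v where "v < n" "w = \<phi> v"
      using True \<phi>(1) unfolding bij_betw_def by (metis imageE lessThan_iff)
    then obtain f where "induced_iso G H f (ball G 2 v) (ball H 2 w)"
      using \<phi>(2) unfolding nbhd_iso_iff by blast
    then show ?thesis using induced_iso_card_eq G finite_ball[OF H] unfolding small_balls_def by metis
  next
    case False
    then show ?thesis using ball_outside_lessThan[OF H] by simp
  qed
qed

theorem small_balls_reconstructible:
  assumes G: "G \<in> graphs_on n" and small: "small_balls G"
  shows "reconstructible n 2 G"
  unfolding reconstructible_def
proof (intro ballI impI)
  fix H assume H: "H \<in> graphs_on n" and same: "same_nbhds n 2 G H"
  obtain \<phi> where \<phi>: "bij_betw \<phi> {..<n} {..<n}" "\<forall>v\<in>{..<n}. nbhd_iso G H 2 v (\<phi> v)"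
    using same unfolding same_nbhds_def by blast
  have GE: "G \<subseteq> all_edges n" and HE: "H \<subseteq> all_edges n" using G H unfolding graphs_on_def by auto
  show "graph_iso n G H"
    unfolding graph_iso_iff
    using small_balls_same_nbhds_iso[OF _ edges_within_all_edges[OF GE] edges_within_all_edges[OF HE]
        small same_nbhds_small_balls[OF small HE same] \<phi>] by blast
qed

definition small_subgraphs :: "nat \<Rightarrow> nat set set set" where
  "small_subgraphs n = {F. F \<subseteq> all_edges n \<and> card F = 4 \<and> card (\<Union>F) \<le> 5}"

lemma subset_image_PiE:
  assumes "finite T" "T \<subseteq> A" "card T \<le> k" "T \<noteq> {}"
  shows "\<exists>a\<in>{..<k} \<rightarrow>\<^sub>E A. T \<subseteq> a ` {..<k}"
proof -
  obtain t0 where t0: "t0 \<in> T" using assms(4) by blast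
  obtain h where h: "bij_betw h {..<card T} T"
    using ex_bij_betw_nat_finite[OF assms(1)] by (auto simp: atLeast0LessThan)
  define a where "a = restrict (\<lambda>i. if i < card T then h i else t0) {..<k}"
  have "a \<in> {..<k} \<rightarrow>\<^sub>E A"
    using bij_betw_apply[OF h] t0 assms(2) by (auto simp: a_def)
  moreover have "T \<subseteq> a ` {..<k}"
  proof
    fix t assume "t \<in> T"
    then obtain i where i: "i < card T" "t = h i" using h unfolding bij_betw_def by auto
    then have "a i = t" "i < k" unfolding a_def using assms(3) by auto
    then show "t \<in> a ` {..<k}" by force
  qed
  ultimately show ?thesis by blast
qed

lemma card_small_subgraphs_le: "finite (small_subgraphs n) \<and> card (small_subgraphs n) \<le> 2^32 * n^5"
proof -
  let ?P = "{..<5::nat} \<rightarrow>\<^sub>E {..<n::nat}"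
  let ?U = "\<Union>a\<in>?P. Pow (Pow (a ` {..<5::nat}))"
  have sub: "small_subgraphs n \<subseteq> ?U"
  proof
    fix F assume F: "F \<in> small_subgraphs n"
    then have sub: "\<Union>F \<subseteq> {..<n}" unfolding small_subgraphs_def all_edges_def by auto
    then have fin: "finite (\<Union>F)" using finite_subset by auto
    have card: "card (\<Union>F) \<le> 5" using F unfolding small_subgraphs_def by blast
    have "F \<noteq> {}" "\<forall>e\<in>F. card e = 2" using F unfolding small_subgraphs_def all_edges_def by auto
    then have "\<Union>F \<noteq> {}" by fastforce
    then obtain a where "a \<in> ?P" "\<Union>F \<subseteq> a ` {..<5}" using subset_image_PiE[OF fin sub card] by blast
    moreover have "F \<subseteq> Pow (\<Union>F)" by blast
    ultimately show "F \<in> ?U" by blast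
  qed
  have "finite ?U" by (simp add: finite_PiE)
  have "card (Pow (Pow (a ` {..<5::nat}))) \<le> 2^32" for a :: "nat \<Rightarrow> nat"
  proof -
    have "card (a ` {..<5::nat}) \<le> 5" using card_image_le[of "{..<5::nat}" a] by simp
    then have "(2::nat) ^ card (a ` {..<5::nat}) \<le> 2^5" by (rule power_increasing) simp
    then have "(2::nat) ^ (2 ^ card (a ` {..<5::nat})) \<le> 2 ^ (2^5)" by (rule power_increasing) simp
    then show ?thesis by (simp add: card_Pow)
  qed
  then have "card ?U \<le> (\<Sum>a\<in>?P. 2^32)"
    by (intro order_trans[OF card_UN_le] sum_mono) (simp_all add: finite_PiE)
  also have "\<dots> = 2^32 * n^5" by (simp add: card_PiE)
  finally show ?thesis using card_mono[OF \<open>finite ?U\<close> sub] finite_subset[OF sub \<open>finite ?U\<close>] by linarith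
qed

lemma card_le_Suc_Un:
  assumes "finite A" "finite B" "S \<subseteq> insert v (A \<union> B)"
  shows "card S \<le> Suc (card A + card B)"
proof -
  have "card S \<le> card (insert v (A \<union> B))" using assms by (simp add: card_mono)
  also have "\<dots> \<le> Suc (card (A \<union> B))" using assms(1,2) by (simp add: card_insert_if)
  also have "\<dots> \<le> Suc (card A + card B)" using card_Un_le[of A B] by simp
  finally show ?thesis .
qed

lemma card_star_with_pendants:
  assumes "finite U" "finite W" "v \<notin> U" "v \<notin> W" "v \<notin> par ` W" "par ` W \<inter> W = {}"
  shows "card ((\<lambda>u. {v, u}) ` U \<union> (\<lambda>z. {par z, z}) ` W) = card U + card W"
proof -
  have "inj_on (\<lambda>u. {v, u}) U" using assms(3) by (auto simp: inj_on_def doubleton_eq_iff)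
  moreover have "inj_on (\<lambda>z. {par z, z}) W" using assms(6) by (auto simp: inj_on_def doubleton_eq_iff)
  moreover have "(\<lambda>u. {v, u}) ` U \<inter> (\<lambda>z. {par z, z}) ` W = {}" using assms(4,5) by auto
  ultimately show ?thesis using assms(1,2) by (simp add: card_Un_disjoint card_image)
qed

text \<open>Four edges of a breadth-first tree of a 2-ball with at least 5 vertices: as many
  edges at the centre as possible, completed by edges to second neighbours.\<close>

lemma big_ball_contains_small_subgraph:
  assumes E: "E \<subseteq> all_edges n" and big: "\<not> card (ball E 2 v) \<le> 4"
  shows "\<exists>F\<in>small_subgraphs n. F \<subseteq> E"
proof -
  have fin: "finite (ball E 2 v)" using finite_ball[OF E] .
  define N1 where "N1 = {u. {v, u} \<in> E}"
  define N2 where "N2 = ball E 2 v - insert v N1"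
  have vN1: "v \<notin> N1" unfolding N1_def using edges_within_neq[OF edges_within_all_edges[OF E]] by blast
  have N1_ball: "insert v N1 \<subseteq> ball E 2 v" unfolding N1_def by (auto simp: mem_ball_2)
  have "finite N1" using fin N1_ball finite_subset by auto
  moreover have "finite N2" using fin unfolding N2_def by simp
  moreover have "ball E 2 v \<subseteq> insert v (N1 \<union> N2)" unfolding N2_def by blast
  ultimately have card_ball: "card (ball E 2 v) \<le> Suc (card N1 + card N2)" by (rule card_le_Suc_Un)
  have "\<exists>u. u \<in> N1 \<and> {u, z} \<in> E" if "z \<in> N2" for z
    using that unfolding N2_def N1_def by (auto simp: mem_ball_2)
  then obtain par where par: "\<And>z. z \<in> N2 \<Longrightarrow> par z \<in> N1 \<and> {par z, z} \<in> E" by metis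
  define k where "k = min 4 (card N1)"
  obtain U where U: "U \<subseteq> N1" "card U = k" "finite U"
    using obtain_subset_with_card_n[of k N1] unfolding k_def by auto
  have "4 - k \<le> card N2" using card_ball big unfolding k_def by linarith
  then obtain W where W: "W \<subseteq> N2" "card W = 4 - k" "finite W" by (rule obtain_subset_with_card_n)
  have "U = N1" if "W \<noteq> {}"
  proof -
    have "k = card N1" using that W(2,3) unfolding k_def by auto
    then show ?thesis using card_subset_eq[OF \<open>finite N1\<close> U(1)] U(2) by simp
  qed
  then have parW: "par ` W \<subseteq> U" using par W(1) by blast
  have disj: "v \<notin> U" "v \<notin> W" "v \<notin> par ` W" "par ` W \<inter> W = {}"
    using U(1) W(1) parW vN1 unfolding N2_def by blast+
  define F where "F = (\<lambda>u. {v, u}) ` U \<union> (\<lambda>z. {par z, z}) ` W"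
  have "card F = card U + card W"
    unfolding F_def by (rule card_star_with_pendants[OF U(3) W(3) disj])
  then have "card F = 4" using U(2) W(2) unfolding k_def by simp
  moreover have "F \<subseteq> E" unfolding F_def using U(1) W(1) par unfolding N1_def by auto
  moreover have "\<Union>F \<subseteq> insert v (U \<union> W)" unfolding F_def using parW by auto
  then have "card (\<Union>F) \<le> Suc (card U + card W)" by (rule card_le_Suc_Un[OF U(3) W(3)])
  then have "card (\<Union>F) \<le> 5" using U(2) W(2) unfolding k_def by linarith
  ultimately show ?thesis using E unfolding small_subgraphs_def by blast
qed

lemma sum_weights_supsets:
  fixes p :: real
  assumes A: "finite A" and F: "F \<subseteq> A"
  shows "(\<Sum>E\<in>Pow A. if F \<subseteq> E then p ^ card E * (1 - p) ^ (card A - card E) else 0) = p ^ card F"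
proof -
  let ?q = "\<lambda>x. if x \<in> F then 0 else 1 - p"
  have "p ^ card F = (\<Prod>x\<in>A. if x \<in> F then p else 1)"
    using prod.If_cases[OF A, of "\<lambda>x. x \<in> F" "\<lambda>_. p" "\<lambda>_. 1"] F by (simp add: Int_absorb1)
  also have "\<dots> = (\<Prod>x\<in>A. p + ?q x)" by (rule prod.cong) auto
  also have "\<dots> = (\<Sum>X\<in>Pow A. (\<Prod>x\<in>X. p) * (\<Prod>x\<in>A - X. ?q x))" by (rule prod_add[OF A])
  also have "\<dots> = (\<Sum>E\<in>Pow A. if F \<subseteq> E then p ^ card E * (1 - p) ^ (card A - card E) else 0)"
  proof (rule sum.cong[OF refl])
    fix X assume X: "X \<in> Pow A"
    show "(\<Prod>x\<in>X. p) * (\<Prod>x\<in>A - X. ?q x) = (if F \<subseteq> X then p ^ card X * (1 - p) ^ (card A - card X) else 0)"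
    proof (cases "F \<subseteq> X")
      case True
      then have "(\<Prod>x\<in>A - X. ?q x) = (\<Prod>x\<in>A - X. 1 - p)" by (intro prod.cong) auto
      also have "\<dots> = (1 - p) ^ (card A - card X)" using X A by (simp add: card_Diff_subset finite_subset)
      finally show ?thesis using True by simp
    next
      case False
      then have "(\<Prod>x\<in>A - X. ?q x) = 0" using F A by (subst prod_zero_iff) auto
      then show ?thesis using False by simp
    qed
  qed
  finally show ?thesis by simp
qed

lemma finite_all_edges: "finite (all_edges n)"
  unfolding all_edges_def by (rule finite_subset[of _ "Pow {..<n}"]) auto

lemma gnp_prob_add_compl: "gnp_prob n p P + gnp_prob n p (\<lambda>E. \<not> P E) = 1"
proof -
  have "gnp_prob n p P + gnp_prob n p (\<lambda>E. \<not> P E) =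
      (\<Sum>E\<in>Pow (all_edges n). if {} \<subseteq> E then p ^ card E * (1 - p) ^ (card (all_edges n) - card E) else 0)"
    unfolding gnp_prob_def graphs_on_def by (simp flip: sum.distrib) (rule sum.cong; simp)
  also have "\<dots> = 1" using sum_weights_supsets[OF finite_all_edges empty_subsetI, where p = p] by simp
  finally show ?thesis .
qed

lemma gnp_prob_nonneg: "0 \<le> p \<Longrightarrow> p \<le> 1 \<Longrightarrow> 0 \<le> gnp_prob n p P"
  unfolding gnp_prob_def by (intro sum_nonneg) simp

lemma gnp_prob_le_sum_contains:
  fixes p :: real
  assumes p: "0 \<le> p" "p \<le> 1" and Fs: "finite Fs" "Fs \<subseteq> Pow (all_edges n)"
    and cover: "\<And>E. E \<in> graphs_on n \<Longrightarrow> P E \<Longrightarrow> \<exists>F\<in>Fs. F \<subseteq> E"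
  shows "gnp_prob n p P \<le> (\<Sum>F\<in>Fs. p ^ card F)"
proof -
  let ?A = "all_edges n"
  let ?w = "\<lambda>E. p ^ card E * (1 - p) ^ (card ?A - card E)"
  have "gnp_prob n p P \<le> (\<Sum>E\<in>Pow ?A. \<Sum>F\<in>Fs. if F \<subseteq> E then ?w E else 0)"
    unfolding gnp_prob_def graphs_on_def
  proof (rule sum_mono)
    fix E assume E: "E \<in> Pow ?A"
    show "(if P E then ?w E else 0) \<le> (\<Sum>F\<in>Fs. if F \<subseteq> E then ?w E else 0)"
    proof (cases "P E")
      case True
      then obtain F where "F \<in> Fs" "F \<subseteq> E" using cover E unfolding graphs_on_def by blast
      then have "?w E \<le> (\<Sum>F\<in>Fs. if F \<subseteq> E then ?w E else 0)"
        using member_le_sum[of F Fs "\<lambda>F. if F \<subseteq> E then ?w E else 0"] Fs(1) p by simp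
      then show ?thesis using True by simp
    qed (use p in \<open>simp add: sum_nonneg\<close>)
  qed
  also have "\<dots> = (\<Sum>F\<in>Fs. \<Sum>E\<in>Pow ?A. if F \<subseteq> E then ?w E else 0)" by (rule sum.swap)
  also have "\<dots> = (\<Sum>F\<in>Fs. p ^ card F)"
    using Fs(2) by (intro sum.cong refl sum_weights_supsets[OF finite_all_edges]) blast
  finally show ?thesis .
qed

lemma gnp_prob_reconstructible_ge:
  fixes p :: real
  assumes p: "0 \<le> p" "p \<le> 1"
  shows "1 - 2^32 * (real n ^ 5 * p ^ 4) \<le> gnp_prob n p (reconstructible n 2)"
proof -
  have fin: "finite (small_subgraphs n)" and card: "card (small_subgraphs n) \<le> 2^32 * n^5"
    using card_small_subgraphs_le by blast+
  have sub: "small_subgraphs n \<subseteq> Pow (all_edges n)" unfolding small_subgraphs_def by blast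
  have cover: "\<exists>F\<in>small_subgraphs n. F \<subseteq> E" if E: "E \<in> graphs_on n" "\<not> reconstructible n 2 E" for E
  proof -
    have "E \<subseteq> all_edges n" using E(1) unfolding graphs_on_def by blast
    moreover have "\<not> small_balls E" using small_balls_reconstructible E by blast
    then obtain v where "\<not> card (ball E 2 v) \<le> 4"
      using finite_ball[OF \<open>E \<subseteq> all_edges n\<close>] unfolding small_balls_def by blast
    ultimately show ?thesis by (rule big_ball_contains_small_subgraph)
  qed
  have "gnp_prob n p (\<lambda>E. \<not> reconstructible n 2 E) \<le> (\<Sum>F\<in>small_subgraphs n. p ^ card F)"
    by (rule gnp_prob_le_sum_contains[OF p fin sub cover])
  also have "\<dots> = (\<Sum>F\<in>small_subgraphs n. p ^ 4)"
    by (rule sum.cong) (auto simp: small_subgraphs_def)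
  also have "\<dots> \<le> 2^32 * (real n ^ 5 * p ^ 4)"
    using mult_right_mono[OF of_nat_mono[OF card], of "p ^ 4"] p by simp
  finally show ?thesis using gnp_prob_add_compl[of n p "reconstructible n 2"] by linarith
qed

lemma smallo_powr_tendsto_zero:
  fixes p :: "nat \<Rightarrow> real"
  assumes p: "p \<in> o(\<lambda>n. real n powr (- (real k / real m)))" and m: "m > 0"
  shows "(\<lambda>n. real n ^ k * p n ^ m) \<longlonglongrightarrow> 0"
proof -
  define q where "q n = p n / real n powr (- (real k / real m))" for n
  have "(\<lambda>n. q n ^ m) \<longlonglongrightarrow> 0"
    using smalloD_tendsto[OF p] m unfolding q_def by simp
  moreover have "\<forall>\<^sub>F n in sequentially. q n ^ m = real n ^ k * p n ^ m"
  proof (rule eventually_sequentiallyI)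
    fix n :: nat assume "n \<ge> 1"
    have "(real n powr (- (real k / real m))) ^ m = real n powr (- real k)"
      using \<open>n \<ge> 1\<close> m by (simp add: powr_power)
    also have "\<dots> = inverse (real n ^ k)" using \<open>n \<ge> 1\<close> by (simp add: powr_minus powr_realpow)
    finally have "(real n powr (- (real k / real m))) ^ m = inverse (real n ^ k)" .
    then show "q n ^ m = real n ^ k * p n ^ m" unfolding q_def by (simp add: power_divide field_simps)
  qed
  ultimately show ?thesis by (rule Lim_transform_eventually)
qed

theorem theorem1p5:
  fixes p :: "nat \<Rightarrow> real"
  assumes "\<And>n. 0 \<le> p n \<and> p n \<le> 1"
    and "p \<in> o(\<lambda>n. real n powr (-5/4))"
  shows "(\<lambda>n. gnp_prob n (p n) (reconstructible n 2)) \<longlonglongrightarrow> 1"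
proof (rule tendsto_sandwich)
  have "(-5/4 :: real) = - (real 5 / real 4)" by simp
  then have "(\<lambda>n. real n ^ 5 * p n ^ 4) \<longlonglongrightarrow> 0"
    using smallo_powr_tendsto_zero[of p 5 4] assms(2) by simp
  then show "(\<lambda>n. 1 - 2^32 * (real n ^ 5 * p n ^ 4)) \<longlonglongrightarrow> 1"
    using tendsto_diff[OF tendsto_const tendsto_mult_right_zero] by fastforce
  show "\<forall>\<^sub>F n in sequentially. 1 - 2^32 * (real n ^ 5 * p n ^ 4) \<le> gnp_prob n (p n) (reconstructible n 2)"
    using gnp_prob_reconstructible_ge assms(1) by (intro always_eventually) blast
  show "\<forall>\<^sub>F n in sequentially. gnp_prob n (p n) (reconstructible n 2) \<le> 1"
    using gnp_prob_add_compl gnp_prob_nonneg assms(1) by (intro always_eventually) (smt (verit))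
qed (rule tendsto_const)

end
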